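(* Let $P$ be a query problem (with inputs of a fixed size $n$), let $D(P)$ be its deterministic query complexity and, for each integer $k\ge 0$, let $D_k(P)$ be its $k$-change query complexity, as defined in the context. Then: (i) $D_k(P)\le D(P)$ for every $k\ge 0$; (ii) for every $k\ge 0$, $$D_k(P)\le \min\Big\{\sum_{i=1}^{l} D_{j_i}(P)\;:\; l\ge 1,\ j_1,\dots,j_l\ge 0 \text{ integers},\ \sum_{i=1}^{l}(j_i+1)>k\Big\}.$$
   Context: A query problem $P$ consists of a finite set $X$ of inputs, a function $f:X\to Y$, and a set of allowed queries; each query $q$ has an answer $q(x)$ for each input $x\in X$. The goal is to determine $f(x)$ for an unknown input $x$. The deterministic query complexity $D(P)$ is the minimum, over all adaptive querying strategies (decision trees), of the maximum over inputs of the number of queries asked before the answers received determine $f$ (i.e. all inputs consistent with all answers so far have the same $f$-value). The $k$-change complexity $D_k(P)$ is defined by the following game between a Questioner and an Adversary. The Adversary chooses an input $x\in X$ (the current input). The Questioner, who always knows the current input, asks queries one after another; each query is answered according to the current input. Between queries the Adversary may replace the current input by any other input consistent with all answers given so far, but he may do so at most $k$ times in total. The game ends as soon as the answers given determine the value of $f$. $D_k(P)$ is the number of queries asked when the Questioner plays to minimize and the Adversary plays to maximize the number of queries. (In particular $D_0(P)$ is the non-deterministic/certificate complexity.) *)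

theory Defs
  imports Main "HOL-Library.Extended_Nat"
begin

text \<open>The knowledge state of the Questioner is the set S
  of inputs consistent with all answers so far.\<close>

definition determined :: "('x \<Rightarrow> 'y) \<Rightarrow> 'x set \<Rightarrow> bool" where
  "determined f S \<longleftrightarrow> (\<forall>x\<in>S. \<forall>y\<in>S. f x = f y)"

definition restrict_ans :: "'x set \<Rightarrow> ('x \<Rightarrow> 'a) \<Rightarrow> 'x \<Rightarrow> 'x set" where
  "restrict_ans S q x = {y\<in>S. q y = q x}"

text \<open>dt_le Q f S d: some (adaptive) decision tree of depth at most d determines f
  on the consistent set S.\<close>
primrec dt_le :: "('x \<Rightarrow> 'a) set \<Rightarrow> ('x \<Rightarrow> 'y) \<Rightarrow> 'x set \<Rightarrow> nat \<Rightarrow> bool" where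
  "dt_le Q f S 0 = determined f S"
| "dt_le Q f S (Suc d) =
     (determined f S \<or> (\<exists>q\<in>Q. \<forall>x\<in>S. dt_le Q f (restrict_ans S q x) d))"

text \<open>Deterministic query complexity (infinity if no decision tree works).\<close>
definition qc_D :: "('x \<Rightarrow> 'a) set \<Rightarrow> ('x \<Rightarrow> 'y) \<Rightarrow> 'x set \<Rightarrow> enat" where
  "qc_D Q f X = (INF d\<in>{d. dt_le Q f X d}. enat d)"

text \<open>kwin Q f S x k d: in the k-change game, from a position where S is the set of inputs
  consistent with the answers so far, x is the current input and the Adversary has k changes
  left, the Questioner can force the game to end within d further queries.  After each answer
  the Adversary may keep x or (if k > 0) switch to another consistent input, using a change.\<close>
primrec kwin :: "('x \<Rightarrow> 'a) set \<Rightarrow> ('x \<Rightarrow> 'y) \<Rightarrow> 'x set \<Rightarrow> 'x \<Rightarrow> nat \<Rightarrow> nat \<Rightarrow> bool" where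
  "kwin Q f S x k 0 = determined f S"
| "kwin Q f S x k (Suc d) =
     (determined f S \<or>
      (\<exists>q\<in>Q. kwin Q f (restrict_ans S q x) x k d \<and>
         (0 < k \<longrightarrow> (\<forall>x'\<in>restrict_ans S q x. kwin Q f (restrict_ans S q x) x' (k - 1) d))))"

text \<open>k-change complexity: value of the game (infinity if the Adversary can prolong forever).
  The Adversary's initial choice is any x in X.\<close>
definition qc_Dk :: "('x \<Rightarrow> 'a) set \<Rightarrow> ('x \<Rightarrow> 'y) \<Rightarrow> 'x set \<Rightarrow> nat \<Rightarrow> enat" where
  "qc_Dk Q f X k = (INF d\<in>{d. \<forall>x\<in>X. kwin Q f X x k d}. enat d)"

end

theory Submission
  imports Defs
begin

text \<open>An optimal decision tree is a Questioner strategy that ignores the Adversary's changes,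
  which gives (i).  For (ii), a Questioner who wins within \<open>d\<^sub>1\<close> queries against \<open>j\<^sub>1\<close> changes
  follows that strategy until the game ends or the Adversary makes a \<open>(j\<^sub>1+1)\<close>-st change; at that
  moment she restarts with a strategy winning within \<open>d\<^sub>2\<close> queries against \<open>j\<^sub>2\<close> changes, which
  still works because the set of consistent inputs has only shrunk.  So \<open>j\<^sub>1 + 1 + j\<^sub>2\<close> changes
  cost at most \<open>d\<^sub>1 + d\<^sub>2\<close> queries, and induction over the list gives the bound.\<close>

lemma determined_subset: "determined f S \<Longrightarrow> T \<subseteq> S \<Longrightarrow> determined f T"
  by (auto simp: determined_def)

lemma dt_le_empty: "dt_le Q f {} d"
  by (cases d) (simp_all add: determined_def)

lemma kwin_if_determined: "determined f S \<Longrightarrow> kwin Q f S x k d"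
  by (cases d) simp_all

lemma kwin_SucI:
  assumes "q \<in> Q" "kwin Q f (restrict_ans S q x) x k d"
    "0 < k \<longrightarrow> (\<forall>x'\<in>restrict_ans S q x. kwin Q f (restrict_ans S q x) x' (k - 1) d)"
  shows "kwin Q f S x k (Suc d)"
  using assms by (simp only: kwin.simps) blast

lemma kwin_SucE:
  assumes "kwin Q f S x k (Suc d)" "\<not> determined f S"
  obtains q where "q \<in> Q" "kwin Q f (restrict_ans S q x) x k d"
    "0 < k \<longrightarrow> (\<forall>x'\<in>restrict_ans S q x. kwin Q f (restrict_ans S q x) x' (k - 1) d)"
  using assms by (simp only: kwin.simps) blast

lemma dt_le_imp_kwin: "dt_le Q f S d \<Longrightarrow> kwin Q f S x k d"
proof (induction d arbitrary: S x k)
  case 0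
  then show ?case by simp
next
  case (Suc d)
  show ?case
  proof (cases "determined f S")
    case True
    then show ?thesis by (rule kwin_if_determined)
  next
    case False
    with Suc.prems obtain q where "q \<in> Q" and tree: "\<forall>y\<in>S. dt_le Q f (restrict_ans S q y) d"
      by auto
    have subtree: "dt_le Q f (restrict_ans S q z) d" for z
    proof (cases "\<exists>y\<in>S. q y = q z")
      case True
      then obtain y where "y \<in> S" "restrict_ans S q z = restrict_ans S q y"
        by (auto simp: restrict_ans_def)
      with tree show ?thesis by simp
    next
      case False
      then have "restrict_ans S q z = {}" by (auto simp: restrict_ans_def)
      then show ?thesis by (simp add: dt_le_empty)
    qed
    show ?thesis
      using \<open>q \<in> Q\<close> subtree Suc.IH by (intro kwin_SucI) blast+
  qed
qed

lemma kwin_subset: "kwin Q f S x k d \<Longrightarrow> T \<subseteq> S \<Longrightarrow> kwin Q f T x k d"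
proof (induction d arbitrary: S T x k)
  case 0
  then show ?case by (simp add: determined_subset[of f S T])
next
  case (Suc d)
  show ?case
  proof (cases "determined f S")
    case True
    then show ?thesis using Suc.prems(2) by (intro kwin_if_determined) (rule determined_subset)
  next
    case False
    with Suc.prems(1) obtain q where q: "q \<in> Q" "kwin Q f (restrict_ans S q x) x k d"
      "0 < k \<longrightarrow> (\<forall>x'\<in>restrict_ans S q x. kwin Q f (restrict_ans S q x) x' (k - 1) d)"
      by (rule kwin_SucE)
    have shrink: "restrict_ans T q x \<subseteq> restrict_ans S q x"
      using Suc.prems(2) by (auto simp: restrict_ans_def)
    show ?thesis
    proof (rule kwin_SucI)
      show "kwin Q f (restrict_ans T q x) x k d"
        using Suc.IH[OF q(2) shrink] .
      show "0 < k \<longrightarrow> (\<forall>x'\<in>restrict_ans T q x. kwin Q f (restrict_ans T q x) x' (k - 1) d)"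
      proof (intro impI ballI)
        fix x' assume "0 < k" "x' \<in> restrict_ans T q x"
        with q(3) shrink have "kwin Q f (restrict_ans S q x) x' (k - 1) d" by blast
        then show "kwin Q f (restrict_ans T q x) x' (k - 1) d" by (rule Suc.IH[OF _ shrink])
      qed
    qed (rule q(1))
  qed
qed

lemma kwin_mono_depth: "kwin Q f S x k d \<Longrightarrow> d \<le> d' \<Longrightarrow> kwin Q f S x k d'"
proof (induction d arbitrary: S x k d')
  case 0
  then show ?case by (simp add: kwin_if_determined)
next
  case (Suc d)
  then obtain e where e: "d' = Suc e" "d \<le> e"
    by (cases d') simp_all
  show ?case
  proof (cases "determined f S")
    case True
    then show ?thesis by (rule kwin_if_determined)
  next
    case False
    with Suc.prems(1) obtain q where q: "q \<in> Q" "kwin Q f (restrict_ans S q x) x k d"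
      "0 < k \<longrightarrow> (\<forall>x'\<in>restrict_ans S q x. kwin Q f (restrict_ans S q x) x' (k - 1) d)"
      by (rule kwin_SucE)
    with e Suc.IH show ?thesis by (simp only: e(1)) (intro kwin_SucI; blast)
  qed
qed

lemma kwin_antimono_changes: "kwin Q f S x k d \<Longrightarrow> k' \<le> k \<Longrightarrow> kwin Q f S x k' d"
proof (induction d arbitrary: S x k k')
  case 0
  then show ?case by simp
next
  case (Suc d)
  show ?case
  proof (cases "determined f S")
    case True
    then show ?thesis by (rule kwin_if_determined)
  next
    case False
    with Suc.prems(1) obtain q where q: "q \<in> Q" "kwin Q f (restrict_ans S q x) x k d"
      "0 < k \<longrightarrow> (\<forall>x'\<in>restrict_ans S q x. kwin Q f (restrict_ans S q x) x' (k - 1) d)"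
      by (rule kwin_SucE)
    have "k' - 1 \<le> k - 1" "0 < k' \<longrightarrow> 0 < k"
      using Suc.prems(2) by simp_all
    with q Suc.IH Suc.prems(2) show ?thesis by (intro kwin_SucI) blast+
  qed
qed

lemma kwin_restart:
  assumes restart: "\<forall>y\<in>X. kwin Q f X y j' d'"
  shows "S \<subseteq> X \<Longrightarrow> kwin Q f S x j d \<Longrightarrow> kwin Q f S x (j + 1 + j') (d + d')"
proof (induction d arbitrary: S x j)
  case 0
  then show ?case by (simp add: kwin_if_determined)
next
  case (Suc d)
  show ?case
  proof (cases "determined f S")
    case True
    then show ?thesis by (rule kwin_if_determined)
  next
    case False
    with Suc.prems(2) obtain q where q: "q \<in> Q" "kwin Q f (restrict_ans S q x) x j d"
      "0 < j \<longrightarrow> (\<forall>x'\<in>restrict_ans S q x. kwin Q f (restrict_ans S q x) x' (j - 1) d)"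
      by (rule kwin_SucE)
    define R where "R = restrict_ans S q x"
    have "R \<subseteq> X" using Suc.prems(1) by (auto simp: R_def restrict_ans_def)
    have changed: "kwin Q f R x' (j + j') (d + d')" if "x' \<in> R" for x'
    proof (cases "j = 0")
      case True
      from restart \<open>R \<subseteq> X\<close> \<open>x' \<in> R\<close> have "kwin Q f R x' j' d'"
        by (blast intro: kwin_subset)
      with True show ?thesis by (auto elim: kwin_mono_depth)
    next
      case False
      with q(3) \<open>x' \<in> R\<close> have "kwin Q f R x' (j - 1) d" by (simp add: R_def)
      with Suc.IH[OF \<open>R \<subseteq> X\<close>] False show ?thesis by fastforce
    qed
    have "kwin Q f S x (j + 1 + j') (Suc (d + d'))"
      using q(1) Suc.IH[OF \<open>R \<subseteq> X\<close> q(2)[folded R_def]] changed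
      by (intro kwin_SucI) (auto simp: R_def)
    then show ?thesis by simp
  qed
qed

lemma qc_Dk_le_enatI: "\<forall>x\<in>X. kwin Q f X x k d \<Longrightarrow> qc_Dk Q f X k \<le> enat d"
  unfolding qc_Dk_def by (rule INF_lower) simp

lemma kwin_qc_Dk:
  assumes "qc_Dk Q f X k = enat d"
  shows "\<forall>x\<in>X. kwin Q f X x k d"
proof -
  let ?A = "{d. \<forall>x\<in>X. kwin Q f X x k d}"
  have "enat ` ?A \<noteq> {}"
  proof
    assume "enat ` ?A = {}"
    then have "qc_Dk Q f X k = \<infinity>"
      unfolding qc_Dk_def by (simp only: Inf_empty top_enat_def)
    with assms show False by simp
  qed
  then have "Inf (enat ` ?A) \<in> enat ` ?A"
    by (auto intro: wellorder_InfI)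
  with assms have "enat d \<in> enat ` ?A"
    by (simp add: qc_Dk_def)
  then show ?thesis by auto
qed

lemma qc_Dk_le_qc_D: "qc_Dk Q f X k \<le> qc_D Q f X"
  unfolding qc_Dk_def qc_D_def by (rule INF_superset_mono) (auto intro: dt_le_imp_kwin)

lemma qc_Dk_antimono: "k \<le> k' \<Longrightarrow> qc_Dk Q f X k \<le> qc_Dk Q f X k'"
  unfolding qc_Dk_def by (rule INF_superset_mono) (auto intro: kwin_antimono_changes)

lemma qc_Dk_subadditive: "qc_Dk Q f X (j + 1 + j') \<le> qc_Dk Q f X j + qc_Dk Q f X j'"
proof (cases "qc_Dk Q f X j" ; cases "qc_Dk Q f X j'")
  fix d d'
  assume "qc_Dk Q f X j = enat d" "qc_Dk Q f X j' = enat d'"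
  with kwin_qc_Dk have "\<forall>x\<in>X. kwin Q f X x j d" "\<forall>x\<in>X. kwin Q f X x j' d'"
    by blast+
  then have "\<forall>x\<in>X. kwin Q f X x (j + 1 + j') (d + d')"
    by (blast intro: kwin_restart)
  then show ?thesis
    using \<open>qc_Dk Q f X j = enat d\<close> \<open>qc_Dk Q f X j' = enat d'\<close> by (simp add: qc_Dk_le_enatI)
qed simp_all

lemma qc_Dk_le_sum_list:
  "js \<noteq> [] \<Longrightarrow> k < sum_list (map Suc js) \<Longrightarrow>
   qc_Dk Q f X k \<le> sum_list (map (qc_Dk Q f X) js)"
proof (induction js arbitrary: k)
  case Nil
  then show ?case by simp
next
  case (Cons j js)
  show ?case
  proof (cases "js = []")
    case True
    with Cons.prems show ?thesis by (simp add: qc_Dk_antimono)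
  next
    case False
    then obtain k' where k': "sum_list (map Suc js) = Suc k'"
      by (cases js) auto
    with Cons.prems(2) have "k \<le> j + 1 + k'" "k' < sum_list (map Suc js)"
      by simp_all
    have "qc_Dk Q f X k \<le> qc_Dk Q f X (j + 1 + k')"
      using \<open>k \<le> j + 1 + k'\<close> by (rule qc_Dk_antimono)
    also have "\<dots> \<le> qc_Dk Q f X j + qc_Dk Q f X k'"
      by (rule qc_Dk_subadditive)
    also have "\<dots> \<le> qc_Dk Q f X j + sum_list (map (qc_Dk Q f X) js)"
      using Cons.IH[OF False \<open>k' < sum_list (map Suc js)\<close>] by (rule add_left_mono)
    finally show ?thesis by simp
  qed
qed

theorem proposition1:
  fixes X :: "'x set" and f :: "'x \<Rightarrow> 'y" and Q :: "('x \<Rightarrow> 'a) set"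
  assumes "finite X"
  shows "(\<forall>k. qc_Dk Q f X k \<le> qc_D Q f X) \<and>
         (\<forall>k. qc_Dk Q f X k \<le>
            (INF js\<in>{js :: nat list. js \<noteq> [] \<and> k < sum_list (map Suc js)}.
               sum_list (map (qc_Dk Q f X) js)))"
  by (auto intro!: INF_greatest qc_Dk_le_qc_D qc_Dk_le_sum_list)

end
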